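(* Assume $\operatorname{rk}L=2$, $\omega$ non-degenerate, and all exchange collections consist of primitive vectors. (a) If $V$ is empty then $\mathcal U(V)=\mathcal Q[L^*]$. (b) Let $V$ be an exchange collection and $(V_\alpha)_\alpha$ a nonempty family of exchange collections with $m_V(v)=\max_\alpha m_{V_\alpha}(v)$ for every $v\in L$. Then $\mathcal U(V)=\bigcap_\alpha\mathcal U(V_\alpha)$. In particular $\mathcal U(V)=\bigcap_{v\in L}\mathcal U(\{m_V(v)\times v\})$. (c) Let $V$ consist of a vector $v_1$ with multiplicity $m_+\ge1$, the vector $-v_1$ with multiplicity $m_-\ge0$, and pairwise distinct vectors $v_k$ ($k\ge3$) not collinear with $v_1$, with multiplicities $m_k\ge0$. Put $V_0=\{m_+\times v_1,\ m_-\times(-v_1)\}$ and $V_k=\{1\times v_1,\ m_k\times v_k\}$ for $k\ge3$. Then $\mathcal U(V)=\mathcal U(V_0)\cap\bigcap_{k\ge3}\mathcal U(V_k)$. (d) With $V$ as in (c), the mutation $V'$ of $V$ in (one copy of) $v_1$ consists of $-v_1$ with multiplicity $m_-+1$, $v_1$ with multiplicity $m_+-1$, and $v_k'=v_k+\max(0,\omega(v_1,v_k))v_1$ with multiplicity $m_k$ ($k\ge3$). Put $V_0'=\{(m_-+1)\times(-v_1),\ (m_+-1)\times v_1\}$ and $V_k'=\{1\times(-v_1),\ m_k\times v_k'\}$. Then $\mathcal U(V')=\mathcal U(V_0')\cap\bigcap_{k\ge3}\mathcal U(V_k')$.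
   Context: Let $L$ be a lattice, $L^*=\mathrm{Hom}(L,\mathbb Z)$, $(\cdot,\cdot)$ the canonical pairing, and $\omega$ a skew-symmetric integral bilinear form on $L$. Let $\mathcal Q=\mathbb Q(e^{2\pi i\mathbb Q})$ be $\mathbb Q$ with all roots of unity adjoined, $\mathcal Q[L^*]$ the group algebra of $L^*$ with monomials $X^m$, and $\mathbb K_L$ its fraction field. For $v\in L$, $\mu_v^*$ is the $\mathcal Q$-algebra automorphism of $\mathbb K_L$ with $\mu_v^*(X^m)=X^m(1+X^{\omega(\cdot,v)})^{-(m,v)}$, where $\omega(\cdot,v)\in L^*$ is $w\mapsto\omega(w,v)$. An exchange collection is a finite tuple of vectors of $L$ (repetitions allowed) with multiplicity function $m_V(v)=\#\{i:v_i=v\}$; $\{m_1\times u_1,\dots\}$ denotes the collection containing $u_j$ with multiplicity $m_j$. The upper bound is $\mathcal U(V)=\mathcal Q[L^*]\cap\bigcap_{v\in L}(\mu_v^* )^{m_V(v)}(\mathcal Q[L^*])$. The mutation of $V=(v_1,\dots,v_n)$ in direction $j$ replaces $v_j$ by $-v_j$ and each $v_i$ ($i\neq j$) by $v_i+\max(0,\omega(v_j,v_i))v_j$. *)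

theory Defs
  imports Complex_Main "HOL-Library.Poly_Mapping" "HOL-Library.Product_Lexorder"
    "HOL-Library.Product_Plus" "HOL-Library.Multiset"
    "HOL-Computational_Algebra.Fraction_Field"
begin

text \<open>It is only used so that the library provides the integral-domain instance of the
  group algebra (finitely supported functions int x int to complex), needed to form its fraction field.\<close>

instance prod :: (ordered_cancel_comm_monoid_add, ordered_cancel_comm_monoid_add)
  ordered_cancel_comm_monoid_add
proof
  fix a b c :: "'a \<times> 'b"
  assume "a \<le> b"
  then show "c + a \<le> c + b"
    by (cases a; cases b; cases c)
       (auto simp: less_eq_prod_def less_prod_def add_strict_left_mono add_left_mono)
qed

text \<open>The lattice L of rank 2 is identified with int \<times> int, and L^* = Hom(L,Z) with
  int \<times> int via the standard dual basis, so that the canonical pairing is the dot product.\<close>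

type_synonym lat = "int \<times> int"
type_synonym dlat = "int \<times> int"

definition pairing :: "dlat \<Rightarrow> lat \<Rightarrow> int" where
  "pairing m v = fst m * fst v + snd m * snd v"

definition smul :: "int \<Rightarrow> lat \<Rightarrow> lat" where
  "smul c v = (c * fst v, c * snd v)"

definition bilinear_form :: "(lat \<Rightarrow> lat \<Rightarrow> int) \<Rightarrow> bool" where
  "bilinear_form \<omega> \<longleftrightarrow> (\<forall>u u' v. \<omega> (u + u') v = \<omega> u v + \<omega> u' v)
                       \<and> (\<forall>u v v'. \<omega> u (v + v') = \<omega> u v + \<omega> u v')"

definition skew_form :: "(lat \<Rightarrow> lat \<Rightarrow> int) \<Rightarrow> bool" where
  "skew_form \<omega> \<longleftrightarrow> (\<forall>u v. \<omega> u v = - \<omega> v u)"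

definition nondegenerate :: "(lat \<Rightarrow> lat \<Rightarrow> int) \<Rightarrow> bool" where
  "nondegenerate \<omega> \<longleftrightarrow> (\<forall>u. (\<forall>v. \<omega> u v = 0) \<longrightarrow> u = 0)"

definition primitive :: "lat \<Rightarrow> bool" where
  "primitive v \<longleftrightarrow> gcd (fst v) (snd v) = 1"

definition collinear :: "lat \<Rightarrow> lat \<Rightarrow> bool" where
  "collinear u v \<longleftrightarrow> fst u * snd v = snd u * fst v"

definition omega_dual :: "(lat \<Rightarrow> lat \<Rightarrow> int) \<Rightarrow> lat \<Rightarrow> dlat" where
  "omega_dual \<omega> v = (\<omega> (1,0) v, \<omega> (0,1) v)"

text \<open>The field Q(e^{2 pi i Q}): the subfield of C generated by all roots of unity.\<close>
definition subfield_C :: "complex set \<Rightarrow> bool" where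
  "subfield_C F \<longleftrightarrow> 0 \<in> F \<and> 1 \<in> F \<and> (\<forall>x\<in>F. \<forall>y\<in>F. x + y \<in> F \<and> x * y \<in> F \<and> x - y \<in> F)
     \<and> (\<forall>x\<in>F. inverse x \<in> F)"

definition Qcyc :: "complex set" where
  "Qcyc = \<Inter> {F. subfield_C F \<and> {z. \<exists>n>0. z ^ n = 1} \<subseteq> F}"

text \<open>Group algebra C[L^*] and its fraction field; Q[L^*] and K_L sit inside these.\<close>
type_synonym galg = "dlat \<Rightarrow>\<^sub>0 complex"
type_synonym frac = "galg fract"

definition monX :: "dlat \<Rightarrow> frac" where
  "monX m = Fract (Poly_Mapping.single m 1) 1"

definition const :: "complex \<Rightarrow> frac" where
  "const c = Fract (Poly_Mapping.single 0 c) 1"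

definition laurentQ :: "frac set" where
  "laurentQ = {Fract p 1 | p. \<forall>m. Poly_Mapping.lookup p m \<in> Qcyc}"

definition mu_poly :: "(lat \<Rightarrow> lat \<Rightarrow> int) \<Rightarrow> lat \<Rightarrow> galg \<Rightarrow> frac" where
  "mu_poly \<omega> v p = (\<Sum>m\<in>Poly_Mapping.keys p.
      const (Poly_Mapping.lookup p m) * monX m
        * (1 + monX (omega_dual \<omega> v)) powi (- pairing m v))"

text \<open>mu_v^* on the fraction field (independent of the chosen representative).\<close>
definition mu :: "(lat \<Rightarrow> lat \<Rightarrow> int) \<Rightarrow> lat \<Rightarrow> frac \<Rightarrow> frac" where
  "mu \<omega> v x = (let pq = (SOME pq. snd pq \<noteq> 0 \<and> x = Fract (fst pq) (snd pq))
                in mu_poly \<omega> v (fst pq) / mu_poly \<omega> v (snd pq))"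

text \<open>Exchange collections are represented by multisets of lattice vectors
  (the upper bound depends only on the multiplicity function m_V = count V).\<close>
definition upper :: "(lat \<Rightarrow> lat \<Rightarrow> int) \<Rightarrow> lat multiset \<Rightarrow> frac set" where
  "upper \<omega> V = laurentQ \<inter> (\<Inter>v. ((mu \<omega> v) ^^ (count V v)) ` laurentQ)"

definition prim_coll :: "lat multiset \<Rightarrow> bool" where
  "prim_coll V \<longleftrightarrow> (\<forall>v\<in>#V. primitive v)"

definition mutate :: "(lat \<Rightarrow> lat \<Rightarrow> int) \<Rightarrow> lat list \<Rightarrow> nat \<Rightarrow> lat list" where
  "mutate \<omega> xs j = map (\<lambda>i. if i = j then - (xs ! j)
                            else xs ! i + smul (max 0 (\<omega> (xs ! j) (xs ! i))) (xs ! j))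
                     [0..<length xs]"

end

(*
  Because omega(v, v) = 0, the binomial 1 + X^omega(., v) is fixed by mu_v, so the j-th iterate
  of mu_v sends X^m to X^m (1 + X^omega(., v))^(-j (m, v)).  Decompose a Laurent polynomial g
  into its graded parts with respect to (., v).  If mu_v^a(g) is again a Laurent polynomial,
  clearing denominators shows that the part of each positive degree k is divisible by
  (1 + X^omega(., v))^(a k); hence mu_v^(a - b)(g) is a Laurent polynomial for b <= a.  So the sets
  Q[L^*] \<inter> mu_v^m(Q[L^*]) decrease in m, the upper bound of a collection only depends on the
  largest multiplicity in each direction, and (a)-(d) reduce to bookkeeping with multiplicities,
  using that the mutation in v_1 fixes +-v_1 and moves the other directions injectively.
*)

theory Submission
  imports Defs
begin

definition to_frac :: "galg \<Rightarrow> frac" where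
  "to_frac p = Fract p 1"

lemma to_frac_add: "to_frac (p + q) = to_frac p + to_frac q"
  by (simp add: to_frac_def)

lemma to_frac_mult: "to_frac (p * q) = to_frac p * to_frac q"
  by (simp add: to_frac_def)

lemma to_frac_0 [simp]: "to_frac 0 = 0"
  by (simp add: to_frac_def fract_collapse)

lemma to_frac_1 [simp]: "to_frac 1 = 1"
  by (simp add: to_frac_def fract_collapse)

lemma to_frac_eq_iff: "to_frac p = to_frac q \<longleftrightarrow> p = q"
  by (simp add: to_frac_def eq_fract)

lemma to_frac_sum: "to_frac (sum f S) = (\<Sum>x\<in>S. to_frac (f x))"
  by (induction S rule: infinite_finite_induct) (auto simp: to_frac_add)

lemma to_frac_power: "to_frac (p ^ n) = to_frac p ^ n"
  by (induction n) (auto simp: to_frac_mult)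

lemma Qcyc_0: "0 \<in> Qcyc" and Qcyc_1: "1 \<in> Qcyc"
  by (auto simp: Qcyc_def subfield_C_def)

lemma Qcyc_add: "x \<in> Qcyc \<Longrightarrow> y \<in> Qcyc \<Longrightarrow> x + y \<in> Qcyc"
  by (auto simp: Qcyc_def subfield_C_def)

lemma Qcyc_mult: "x \<in> Qcyc \<Longrightarrow> y \<in> Qcyc \<Longrightarrow> x * y \<in> Qcyc"
  by (auto simp: Qcyc_def subfield_C_def)

definition Qcyc_poly :: "galg \<Rightarrow> bool" where
  "Qcyc_poly p \<longleftrightarrow> (\<forall>m. Poly_Mapping.lookup p m \<in> Qcyc)"

lemma laurentQ_eq_image: "laurentQ = to_frac ` {p. Qcyc_poly p}"
  by (auto simp: laurentQ_def to_frac_def Qcyc_poly_def)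

lemma to_frac_in_laurentQ: "Qcyc_poly p \<Longrightarrow> to_frac p \<in> laurentQ"
  by (simp add: laurentQ_eq_image)

lemma poly_mapping_sum_single:
  "p = (\<Sum>m\<in>Poly_Mapping.keys p. Poly_Mapping.single m (Poly_Mapping.lookup p m))"
  by (rule poly_mapping_eqI) (simp add: lookup_sum lookup_single when_def in_keys_iff)

lemma Qcyc_poly_0 [simp]: "Qcyc_poly 0"
  and Qcyc_poly_1 [simp]: "Qcyc_poly 1"
  by (simp_all add: Qcyc_poly_def lookup_one when_def Qcyc_0 Qcyc_1)

lemma Qcyc_poly_add: "Qcyc_poly p \<Longrightarrow> Qcyc_poly q \<Longrightarrow> Qcyc_poly (p + q)"
  by (simp add: Qcyc_poly_def lookup_add Qcyc_add)

lemma Qcyc_poly_sum: "(\<And>x. x \<in> S \<Longrightarrow> Qcyc_poly (f x)) \<Longrightarrow> Qcyc_poly (sum f S)"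
  by (induction S rule: infinite_finite_induct) (auto simp: Qcyc_poly_add)

lemma Qcyc_poly_single: "c \<in> Qcyc \<Longrightarrow> Qcyc_poly (Poly_Mapping.single m c)"
  by (auto simp: Qcyc_poly_def lookup_single when_def Qcyc_0)

lemma Qcyc_poly_mult:
  assumes p: "Qcyc_poly p" and q: "Qcyc_poly q"
  shows "Qcyc_poly (p * q)"
proof -
  have "p * q = (\<Sum>m\<in>Poly_Mapping.keys p. \<Sum>n\<in>Poly_Mapping.keys q.
      Poly_Mapping.single (m + n) (Poly_Mapping.lookup p m * Poly_Mapping.lookup q n))"
    by (subst poly_mapping_sum_single[of p], subst poly_mapping_sum_single[of q])
       (simp add: sum_product mult_single)
  also have "Qcyc_poly \<dots>"
    using p q by (intro Qcyc_poly_sum Qcyc_poly_single Qcyc_mult) (auto simp: Qcyc_poly_def)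
  finally show ?thesis .
qed

lemma Qcyc_poly_power: "Qcyc_poly p \<Longrightarrow> Qcyc_poly (p ^ n)"
  by (induction n) (auto simp: Qcyc_poly_mult)

lemma laurentQ_add: "x \<in> laurentQ \<Longrightarrow> y \<in> laurentQ \<Longrightarrow> x + y \<in> laurentQ"
  by (auto simp: laurentQ_eq_image to_frac_add[symmetric] intro!: imageI Qcyc_poly_add)

lemma laurentQ_sum: "(\<And>x. x \<in> S \<Longrightarrow> f x \<in> laurentQ) \<Longrightarrow> sum f S \<in> laurentQ"
  using to_frac_in_laurentQ[OF Qcyc_poly_0]
  by (induction S rule: infinite_finite_induct) (auto simp: laurentQ_add)

lemma pairing_add [simp]: "pairing (a + b) v = pairing a v + pairing b v"
  by (simp add: pairing_def algebra_simps)

lemma pairing_0 [simp]: "pairing 0 v = 0"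
  by (simp add: pairing_def)

definition graded_part :: "lat \<Rightarrow> int \<Rightarrow> galg \<Rightarrow> galg" where
  "graded_part v k p =
     (\<Sum>m\<in>{m\<in>Poly_Mapping.keys p. pairing m v = k}. Poly_Mapping.single m (Poly_Mapping.lookup p m))"

lemma lookup_graded_part:
  "Poly_Mapping.lookup (graded_part v k p) n = (if pairing n v = k then Poly_Mapping.lookup p n else 0)"
  by (auto simp: graded_part_def lookup_sum lookup_single when_def in_keys_iff)

lemma graded_part_add: "graded_part v k (p + q) = graded_part v k p + graded_part v k q"
  by (rule poly_mapping_eqI) (simp add: lookup_graded_part lookup_add)

lemma graded_part_0 [simp]: "graded_part v k 0 = 0"
  by (rule poly_mapping_eqI) (simp add: lookup_graded_part)

lemma graded_part_sum: "graded_part v k (sum f S) = (\<Sum>x\<in>S. graded_part v k (f x))"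
  by (induction S rule: infinite_finite_induct) (auto simp: graded_part_add)

lemma graded_part_graded_part:
  "graded_part v k (graded_part v k' p) = (if k' = k then graded_part v k p else 0)"
  by (rule poly_mapping_eqI) (simp add: lookup_graded_part)

lemma graded_part_eq_self:
  "Poly_Mapping.keys p \<subseteq> {m. pairing m v = k} \<Longrightarrow> graded_part v k p = p"
  by (rule poly_mapping_eqI) (auto simp: lookup_graded_part in_keys_iff)

lemma graded_part_eq_0:
  "k \<notin> (\<lambda>m. pairing m v) ` Poly_Mapping.keys p \<Longrightarrow> graded_part v k p = 0"
  by (rule poly_mapping_eqI) (auto simp: lookup_graded_part in_keys_iff)

lemma keys_graded_part: "Poly_Mapping.keys (graded_part v k p) \<subseteq> {m. pairing m v = k}"
  by (auto simp: in_keys_iff lookup_graded_part split: if_splits)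

lemma sum_graded_parts:
  "p = (\<Sum>k\<in>(\<lambda>m. pairing m v) ` Poly_Mapping.keys p. graded_part v k p)"
proof (rule poly_mapping_eqI)
  fix n
  have "(\<Sum>k\<in>(\<lambda>m. pairing m v) ` Poly_Mapping.keys p. Poly_Mapping.lookup (graded_part v k p) n)
      = (\<Sum>k\<in>(\<lambda>m. pairing m v) ` Poly_Mapping.keys p.
           if k = pairing n v then Poly_Mapping.lookup p n else 0)"
    by (rule sum.cong) (auto simp: lookup_graded_part)
  also have "\<dots> = Poly_Mapping.lookup p n"
    by (subst sum.delta) (auto simp: in_keys_iff)
  finally show "Poly_Mapping.lookup p n
      = Poly_Mapping.lookup (\<Sum>k\<in>(\<lambda>m. pairing m v) ` Poly_Mapping.keys p. graded_part v k p) n"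
    by (simp add: lookup_sum)
qed

lemma Qcyc_poly_graded_part: "Qcyc_poly p \<Longrightarrow> Qcyc_poly (graded_part v k p)"
  by (auto simp: Qcyc_poly_def lookup_graded_part Qcyc_0)

lemma keys_mult_homogeneous:
  assumes "Poly_Mapping.keys p \<subseteq> {m. pairing m v = k}" "Poly_Mapping.keys h \<subseteq> {m. pairing m v = l}"
  shows "Poly_Mapping.keys (p * h) \<subseteq> {m. pairing m v = k + l}"
proof
  fix x assume "x \<in> Poly_Mapping.keys (p * h)"
  then obtain a b where "x = a + b" "a \<in> Poly_Mapping.keys p" "b \<in> Poly_Mapping.keys h"
    using keys_mult[of p h] by blast
  then show "x \<in> {m. pairing m v = k + l}" using assms by auto
qed

lemma graded_part_mult_degree_0:
  assumes h: "Poly_Mapping.keys h \<subseteq> {m. pairing m v = 0}"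
  shows "graded_part v k (p * h) = graded_part v k p * h"
proof -
  let ?K = "(\<lambda>m. pairing m v) ` Poly_Mapping.keys p"
  have homogeneous: "Poly_Mapping.keys (graded_part v k' p * h) \<subseteq> {m. pairing m v = k'}" for k'
    using keys_mult_homogeneous[OF keys_graded_part h] by simp
  have "graded_part v k (p * h) = (\<Sum>k'\<in>?K. graded_part v k (graded_part v k' p * h))"
    by (subst sum_graded_parts[of p v]) (simp add: sum_distrib_right graded_part_sum)
  also have "\<dots> = (\<Sum>k'\<in>?K. if k' = k then graded_part v k p * h else 0)"
  proof (rule sum.cong)
    fix k' assume "k' \<in> ?K"
    show "graded_part v k (graded_part v k' p * h) = (if k' = k then graded_part v k p * h else 0)"
    proof (cases "k' = k")
      case True
      then show ?thesis using graded_part_eq_self[OF homogeneous] by simp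
    next
      case False
      then have "k \<notin> (\<lambda>m. pairing m v) ` Poly_Mapping.keys (graded_part v k' p * h)"
        using homogeneous[of k'] by auto
      then show ?thesis using False by (simp add: graded_part_eq_0)
    qed
  qed simp
  also have "\<dots> = graded_part v k p * h"
    by (auto simp: graded_part_eq_0)
  finally show ?thesis .
qed

context
  fixes \<omega> :: "lat \<Rightarrow> lat \<Rightarrow> int" and v :: lat
  assumes omega_dual_orth: "pairing (omega_dual \<omega> v) v = 0"
begin

definition exch_binomial :: galg where
  "exch_binomial = Poly_Mapping.single 0 1 + Poly_Mapping.single (omega_dual \<omega> v) 1"

definition mu_pow_poly :: "nat \<Rightarrow> galg \<Rightarrow> frac" where
  "mu_pow_poly j p = (\<Sum>m\<in>Poly_Mapping.keys p.
     to_frac (Poly_Mapping.single m (Poly_Mapping.lookup p m))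
       * to_frac exch_binomial powi (- (int j * pairing m v)))"

lemma keys_exch_binomial: "Poly_Mapping.keys exch_binomial \<subseteq> {m. pairing m v = 0}"
  using keys_add[of "Poly_Mapping.single 0 (1::complex)" "Poly_Mapping.single (omega_dual \<omega> v) 1"]
    omega_dual_orth
  by (auto simp: exch_binomial_def)

lemma exch_binomial_nonzero: "exch_binomial \<noteq> 0"
proof
  assume "exch_binomial = 0"
  then have "Poly_Mapping.lookup exch_binomial 0 = 0" by simp
  then show False
    by (cases "omega_dual \<omega> v = 0") (auto simp: exch_binomial_def lookup_add lookup_single lookup_numeral)
qed

lemma to_frac_exch_binomial_nonzero: "to_frac exch_binomial \<noteq> 0"
  using exch_binomial_nonzero to_frac_eq_iff[of exch_binomial 0] by simp

lemma Qcyc_poly_exch_binomial: "Qcyc_poly exch_binomial"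
  unfolding exch_binomial_def by (intro Qcyc_poly_add Qcyc_poly_single Qcyc_1)

lemma exch_binomial_powi_add:
  "to_frac exch_binomial powi (a + b) = to_frac exch_binomial powi a * to_frac exch_binomial powi b"
  using to_frac_exch_binomial_nonzero by (rule power_int_add[OF disjI1])

lemma exch_binomial_powi_nat:
  "e \<ge> 0 \<Longrightarrow> to_frac exch_binomial powi e = to_frac (exch_binomial ^ nat e)"
  by (simp add: power_int_def to_frac_power)

lemma mu_pow_poly_single:
  "mu_pow_poly j (Poly_Mapping.single m c)
     = to_frac (Poly_Mapping.single m c) * to_frac exch_binomial powi (- (int j * pairing m v))"
  by (cases "c = 0") (simp_all add: mu_pow_poly_def)

lemma mu_pow_poly_0 [simp]: "mu_pow_poly j 0 = 0"
  by (simp add: mu_pow_poly_def)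

lemma mu_pow_poly_add: "mu_pow_poly j (p + q) = mu_pow_poly j p + mu_pow_poly j q"
  unfolding mu_pow_poly_def
  by (rule setsum_keys_plus_distrib) (simp_all add: single_add to_frac_add distrib_right)

lemma mu_pow_poly_sum: "mu_pow_poly j (sum f S) = (\<Sum>x\<in>S. mu_pow_poly j (f x))"
  by (induction S rule: infinite_finite_induct) (auto simp: mu_pow_poly_add)

lemma mu_pow_poly_eq_sum_single:
  "mu_pow_poly j p = (\<Sum>m\<in>Poly_Mapping.keys p. mu_pow_poly j (Poly_Mapping.single m (Poly_Mapping.lookup p m)))"
  unfolding mu_pow_poly_single by (simp add: mu_pow_poly_def)

lemma mu_pow_poly_mult: "mu_pow_poly j (p * q) = mu_pow_poly j p * mu_pow_poly j q"
proof -
  have single: "mu_pow_poly j (Poly_Mapping.single m c * Poly_Mapping.single n d)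
     = mu_pow_poly j (Poly_Mapping.single m c) * mu_pow_poly j (Poly_Mapping.single n d)" for m n c d
    by (simp add: mult_single mu_pow_poly_single to_frac_mult[symmetric] algebra_simps
        exch_binomial_powi_add[symmetric])
  have "mu_pow_poly j (p * q) = mu_pow_poly j
      ((\<Sum>m\<in>Poly_Mapping.keys p. Poly_Mapping.single m (Poly_Mapping.lookup p m))
       * (\<Sum>n\<in>Poly_Mapping.keys q. Poly_Mapping.single n (Poly_Mapping.lookup q n)))"
    by (simp flip: poly_mapping_sum_single)
  also have "\<dots> = (\<Sum>m\<in>Poly_Mapping.keys p. mu_pow_poly j (Poly_Mapping.single m (Poly_Mapping.lookup p m)))
      * (\<Sum>n\<in>Poly_Mapping.keys q. mu_pow_poly j (Poly_Mapping.single n (Poly_Mapping.lookup q n)))"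
    by (simp add: sum_product mu_pow_poly_sum single)
  finally show ?thesis
    by (simp flip: mu_pow_poly_eq_sum_single)
qed

lemma mu_pow_poly_1 [simp]: "mu_pow_poly j 1 = 1"
  using mu_pow_poly_single[of j 0 1] by simp

lemma mu_pow_poly_zeroth: "mu_pow_poly 0 p = to_frac p"
  by (subst (2) poly_mapping_sum_single) (simp add: mu_pow_poly_def to_frac_sum)

lemma mu_pow_poly_exch_binomial: "mu_pow_poly 1 exch_binomial = to_frac exch_binomial"
  using omega_dual_orth
  by (simp add: exch_binomial_def mu_pow_poly_add mu_pow_poly_single to_frac_add)

lemma mu_poly_eq_mu_pow_poly: "mu_poly \<omega> v p = mu_pow_poly 1 p"
proof -
  have "to_frac (1 + Poly_Mapping.single (omega_dual \<omega> v) 1)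
      = 1 + to_frac (Poly_Mapping.single (omega_dual \<omega> v) 1)"
    by (simp add: to_frac_add)
  then have "Fract exch_binomial 1 = 1 + Fract (Poly_Mapping.single (omega_dual \<omega> v) 1) 1"
    by (simp add: exch_binomial_def to_frac_def)
  then show ?thesis
    by (simp add: mu_poly_def mu_pow_poly_def const_def monX_def to_frac_def mult_single)
qed

lemma keys_exch_binomial_power: "Poly_Mapping.keys (exch_binomial ^ n) \<subseteq> {m. pairing m v = 0}"
  using keys_mult_homogeneous[OF keys_exch_binomial] by (induction n) auto

lemma mu_pow_poly_graded:
  "mu_pow_poly j p = (\<Sum>k\<in>(\<lambda>m. pairing m v) ` Poly_Mapping.keys p.
     to_frac (graded_part v k p) * to_frac exch_binomial powi (- (int j * k)))"
proof -
  have "mu_pow_poly j p = (\<Sum>k\<in>(\<lambda>m. pairing m v) ` Poly_Mapping.keys p.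
      \<Sum>m\<in>{m\<in>Poly_Mapping.keys p. pairing m v = k}.
        to_frac (Poly_Mapping.single m (Poly_Mapping.lookup p m))
          * to_frac exch_binomial powi (- (int j * pairing m v)))"
    unfolding mu_pow_poly_def by (rule sum.group[symmetric]) auto
  also have "\<dots> = (\<Sum>k\<in>(\<lambda>m. pairing m v) ` Poly_Mapping.keys p.
      \<Sum>m\<in>{m\<in>Poly_Mapping.keys p. pairing m v = k}.
        to_frac (Poly_Mapping.single m (Poly_Mapping.lookup p m)) * to_frac exch_binomial powi (- (int j * k)))"
    by (auto intro!: sum.cong)
  finally show ?thesis
    by (simp add: graded_part_def to_frac_sum sum_distrib_right)
qed

text \<open>Clearing the denominators of an identity mu_pow_poly j p = F by a large power of
  exch_binomial, and comparing graded parts (multiplication by exch_binomial preserves the degree).\<close>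

lemma mu_pow_poly_eq_to_frac_graded:
  assumes "mu_pow_poly j p = to_frac F"
  obtains N :: nat where "\<And>k. k \<in> (\<lambda>m. pairing m v) ` Poly_Mapping.keys p \<Longrightarrow> int j * k \<le> int N"
    and "\<And>k. graded_part v k F * exch_binomial ^ N
               = graded_part v k p * exch_binomial ^ nat (int N - int j * k)"
proof
  let ?K = "(\<lambda>m. pairing m v) ` Poly_Mapping.keys p"
  let ?P = "to_frac exch_binomial"
  define N where "N = (\<Sum>k\<in>?K. nat \<bar>int j * k\<bar>)"
  show N_ge: "int j * k \<le> int N" if "k \<in> ?K" for k
  proof -
    have "nat \<bar>int j * k\<bar> \<le> N"
      unfolding N_def by (rule member_le_sum) (use that in auto)
    then show ?thesis by linarith
  qed
  have "?P powi (- (int j * k)) * ?P ^ N = ?P ^ nat (int N - int j * k)" if "k \<in> ?K" for k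
  proof -
    have "?P powi (- (int j * k)) * ?P ^ N = ?P powi (- (int j * k) + int N)"
      using exch_binomial_powi_add[of "- (int j * k)" "int N"] by simp
    also have "\<dots> = ?P ^ nat (int N - int j * k)"
      using N_ge[OF that] by (simp add: power_int_def)
    finally show ?thesis .
  qed
  then have "to_frac (F * exch_binomial ^ N)
      = (\<Sum>k\<in>?K. to_frac (graded_part v k p) * ?P ^ nat (int N - int j * k))"
    by (simp add: assms[symmetric] to_frac_mult to_frac_power mu_pow_poly_graded sum_distrib_right
        mult.assoc)
  then have expand: "F * exch_binomial ^ N = (\<Sum>k\<in>?K. graded_part v k p * exch_binomial ^ nat (int N - int j * k))"
    by (simp add: to_frac_eq_iff[symmetric] to_frac_sum to_frac_mult to_frac_power)
  fix k
  have "graded_part v k F * exch_binomial ^ N = graded_part v k (F * exch_binomial ^ N)"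
    by (simp add: graded_part_mult_degree_0[OF keys_exch_binomial_power])
  also have "\<dots> = (\<Sum>k'\<in>?K. graded_part v k (graded_part v k' p) * exch_binomial ^ nat (int N - int j * k'))"
    by (simp add: expand graded_part_sum graded_part_mult_degree_0[OF keys_exch_binomial_power])
  also have "\<dots> = (\<Sum>k'\<in>?K. if k' = k then graded_part v k p * exch_binomial ^ nat (int N - int j * k) else 0)"
    by (intro sum.cong refl) (simp add: graded_part_graded_part)
  also have "\<dots> = graded_part v k p * exch_binomial ^ nat (int N - int j * k)"
    by (simp add: graded_part_eq_0)
  finally show "graded_part v k F * exch_binomial ^ N
      = graded_part v k p * exch_binomial ^ nat (int N - int j * k)" .
qed

lemma mu_pow_poly_eq_0_iff: "mu_pow_poly j q = 0 \<longleftrightarrow> q = 0"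
proof
  assume "mu_pow_poly j q = 0"
  then have "mu_pow_poly j q = to_frac 0" by simp
  then obtain N :: nat where
    "\<And>k. k \<in> (\<lambda>m. pairing m v) ` Poly_Mapping.keys q \<Longrightarrow> int j * k \<le> int N" and
    N: "\<And>k. graded_part v k 0 * exch_binomial ^ N
               = graded_part v k q * exch_binomial ^ nat (int N - int j * k)"
    by (rule mu_pow_poly_eq_to_frac_graded) blast
  have "graded_part v k q = 0" for k
    using N[of k] exch_binomial_nonzero by simp
  then show "q = 0" by (subst sum_graded_parts[of q v]) simp
qed simp

lemma mu_Fract:
  assumes "q \<noteq> 0"
  shows "mu \<omega> v (Fract p q) = mu_pow_poly 1 p / mu_pow_poly 1 q"
proof -
  define pq where "pq = (SOME pq. snd pq \<noteq> 0 \<and> Fract p q = Fract (fst pq) (snd pq))"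
  have "snd pq \<noteq> 0 \<and> Fract p q = Fract (fst pq) (snd pq)"
    unfolding pq_def by (rule someI[of _ "(p, q)"]) (simp add: assms)
  then have "snd pq \<noteq> 0" and "p * snd pq = fst pq * q"
    using assms by (auto simp: eq_fract)
  then have "mu_pow_poly 1 (fst pq) / mu_pow_poly 1 (snd pq) = mu_pow_poly 1 p / mu_pow_poly 1 q"
    using assms by (auto simp: frac_eq_eq mu_pow_poly_eq_0_iff mu_pow_poly_mult[symmetric])
  then show ?thesis
    by (simp add: mu_def pq_def[symmetric] mu_poly_eq_mu_pow_poly)
qed

lemma mu_to_frac: "mu \<omega> v (to_frac p) = mu_pow_poly 1 p"
  by (simp add: to_frac_def mu_Fract)

lemma mu_0 [simp]: "mu \<omega> v 0 = 0"
  using mu_to_frac[of 0] by simp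

lemma mu_add: "mu \<omega> v (x + y) = mu \<omega> v x + mu \<omega> v y"
proof -
  obtain a b c d where "x = Fract a b" "b \<noteq> 0" "y = Fract c d" "d \<noteq> 0"
    by (cases x, cases y) auto
  then show ?thesis
    by (simp add: mu_Fract mu_pow_poly_add mu_pow_poly_mult mu_pow_poly_eq_0_iff field_simps)
qed

lemma mu_mult: "mu \<omega> v (x * y) = mu \<omega> v x * mu \<omega> v y"
proof -
  obtain a b c d where "x = Fract a b" "b \<noteq> 0" "y = Fract c d" "d \<noteq> 0"
    by (cases x, cases y) auto
  then show ?thesis
    by (simp add: mu_Fract mu_pow_poly_mult mu_pow_poly_eq_0_iff)
qed

lemma mu_inverse: "mu \<omega> v (inverse x) = inverse (mu \<omega> v x)"
proof -
  obtain a b where "x = Fract a b" "b \<noteq> 0" by (cases x)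
  then show ?thesis
    by (cases "a = 0") (simp_all add: mu_Fract fract_collapse mu_pow_poly_eq_0_iff)
qed

lemma mu_sum: "mu \<omega> v (sum f S) = (\<Sum>x\<in>S. mu \<omega> v (f x))"
  by (induction S rule: infinite_finite_induct) (auto simp: mu_add)

lemma mu_powi: "mu \<omega> v (x powi n) = mu \<omega> v x powi n"
proof -
  have "mu \<omega> v (x ^ k) = mu \<omega> v x ^ k" for x k
    using mu_to_frac[of 1] by (induction k) (simp_all add: mu_mult)
  then show ?thesis by (simp add: power_int_def mu_inverse)
qed

lemma funpow_mu_to_frac: "(mu \<omega> v ^^ j) (to_frac p) = mu_pow_poly j p"
proof (induction j)
  case 0
  then show ?case by (simp add: mu_pow_poly_zeroth)
next
  case (Suc j)
  have "(mu \<omega> v ^^ Suc j) (to_frac p) = mu \<omega> v (mu_pow_poly j p)"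
    by (simp add: Suc)
  also have "\<dots> = (\<Sum>m\<in>Poly_Mapping.keys p.
      mu_pow_poly 1 (Poly_Mapping.single m (Poly_Mapping.lookup p m))
        * to_frac exch_binomial powi (- (int j * pairing m v)))"
    unfolding mu_pow_poly_def[of j p]
    by (simp only: mu_sum mu_mult mu_powi mu_to_frac mu_pow_poly_exch_binomial)
  also have "\<dots> = mu_pow_poly (Suc j) p"
    unfolding mu_pow_poly_def[of "Suc j"] mu_pow_poly_single
    by (intro sum.cong refl)
       (simp add: exch_binomial_powi_add[symmetric] algebra_simps)
  finally show ?case .
qed

lemma graded_term_in_laurentQ:
  assumes F: "Qcyc_poly F" and g: "Qcyc_poly g" and "b \<le> a" and N: "int a * k \<le> int N"
    and eq: "graded_part v k F * exch_binomial ^ N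
               = graded_part v k g * exch_binomial ^ nat (int N - int a * k)"
  shows "to_frac (graded_part v k g) * to_frac exch_binomial powi (- (int (a - b) * k)) \<in> laurentQ"
proof (cases "k \<le> 0")
  case True
  then have "to_frac (graded_part v k g) * to_frac exch_binomial powi (- (int (a - b) * k))
      = to_frac (graded_part v k g * exch_binomial ^ nat (- (int (a - b) * k)))"
    by (simp add: exch_binomial_powi_nat mult_nonneg_nonpos to_frac_mult)
  then show ?thesis
    by (simp add: to_frac_in_laurentQ Qcyc_poly_mult Qcyc_poly_graded_part g Qcyc_poly_power
        Qcyc_poly_exch_binomial)
next
  case False
  let ?P = "to_frac exch_binomial"
  have "N = nat (int a * k) + nat (int N - int a * k)"
    using N False by (subst nat_add_distrib[symmetric]) auto
  then have "graded_part v k F * exch_binomial ^ nat (int a * k) * exch_binomial ^ nat (int N - int a * k)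
      = graded_part v k g * exch_binomial ^ nat (int N - int a * k)"
    using eq by (metis mult.assoc power_add)
  then have g_k: "graded_part v k g = graded_part v k F * exch_binomial ^ nat (int a * k)"
    using exch_binomial_nonzero by simp
  have "to_frac (graded_part v k g) = to_frac (graded_part v k F) * ?P powi (int a * k)"
    using False by (simp add: g_k to_frac_mult exch_binomial_powi_nat)
  then have "to_frac (graded_part v k g) * ?P powi (- (int (a - b) * k))
      = to_frac (graded_part v k F) * ?P powi (int a * k + - (int (a - b) * k))"
    by (simp only: exch_binomial_powi_add mult.assoc)
  also have "int a * k + - (int (a - b) * k) = int b * k"
    using \<open>b \<le> a\<close> by (simp add: algebra_simps)
  also have "to_frac (graded_part v k F) * ?P powi (int b * k)
      = to_frac (graded_part v k F * exch_binomial ^ nat (int b * k))"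
    using False by (simp add: exch_binomial_powi_nat to_frac_mult)
  finally show ?thesis
    by (simp add: to_frac_in_laurentQ Qcyc_poly_mult Qcyc_poly_graded_part F Qcyc_poly_power
        Qcyc_poly_exch_binomial)
qed

text \<open>The witness is mu_v^(a - b)(g): in each positive degree k, g is divisible by the
  (a k)-th power of the exchange binomial, which cancels the new denominators.\<close>

lemma laurentQ_funpow_mu_image_antimono:
  assumes "b \<le> a" and "x \<in> laurentQ" and "x \<in> (mu \<omega> v ^^ a) ` laurentQ"
  shows "x \<in> (mu \<omega> v ^^ b) ` laurentQ"
proof -
  obtain g F where g: "Qcyc_poly g" and x_g: "x = (mu \<omega> v ^^ a) (to_frac g)"
    and F: "Qcyc_poly F" and x_F: "x = to_frac F"
    using assms(2,3) by (auto simp: laurentQ_eq_image)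
  then have "mu_pow_poly a g = to_frac F"
    by (simp add: funpow_mu_to_frac)
  then obtain N :: nat
    where N: "\<And>k. k \<in> (\<lambda>m. pairing m v) ` Poly_Mapping.keys g \<Longrightarrow> int a * k \<le> int N"
      and eq: "\<And>k. graded_part v k F * exch_binomial ^ N
                 = graded_part v k g * exch_binomial ^ nat (int N - int a * k)"
    by (rule mu_pow_poly_eq_to_frac_graded) blast
  have "mu_pow_poly (a - b) g \<in> laurentQ"
    unfolding mu_pow_poly_graded
    using graded_term_in_laurentQ[OF F g \<open>b \<le> a\<close> N eq] by (intro laurentQ_sum)
  moreover have "(mu \<omega> v ^^ b) (mu_pow_poly (a - b) g) = (mu \<omega> v ^^ (b + (a - b))) (to_frac g)"
    by (simp add: funpow_add funpow_mu_to_frac)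
  then have "x = (mu \<omega> v ^^ b) (mu_pow_poly (a - b) g)"
    using x_g \<open>b \<le> a\<close> by simp
  ultimately show ?thesis by blast
qed

end

lemma bilinear_form_add_left: "bilinear_form \<omega> \<Longrightarrow> \<omega> (u + u') v = \<omega> u v + \<omega> u' v"
  and bilinear_form_add_right: "bilinear_form \<omega> \<Longrightarrow> \<omega> u (v + v') = \<omega> u v + \<omega> u v'"
  unfolding bilinear_form_def by blast+

lemma smul_0_left [simp]: "smul 0 x = 0"
  by (simp add: smul_def zero_prod_def)

lemma additive_int_pair:
  fixes f :: "lat \<Rightarrow> int"
  assumes add: "\<And>x y. f (x + y) = f x + f y"
  shows "f u = fst u * f (1, 0) + snd u * f (0, 1)"
proof -
  have f_0: "f 0 = 0"
    using add[of 0 0] by simp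
  have homogeneous: "f (smul c x) = c * f x" for c x
  proof (induction c rule: int_induct[where k = 0])
    case base
    then show ?case using f_0 by simp
  next
    case (step1 i)
    have "smul (i + 1) x = smul i x + x" by (cases x) (simp add: smul_def algebra_simps)
    then show ?case using step1 by (simp add: add algebra_simps)
  next
    case (step2 i)
    have "smul i x = smul (i - 1) x + x" by (cases x) (simp add: smul_def algebra_simps)
    then show ?case using step2 by (simp add: add algebra_simps)
  qed
  have "u = smul (fst u) (1, 0) + smul (snd u) (0, 1)"
    by (simp add: smul_def)
  then show ?thesis
    by (metis add homogeneous)
qed

lemma bilinear_form_smul_right:
  assumes "bilinear_form \<omega>"
  shows "\<omega> u (smul c x) = c * \<omega> u x"
  using additive_int_pair[of "\<omega> u", OF bilinear_form_add_right[OF assms]]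
  by (metis (no_types) smul_def fst_conv snd_conv mult.assoc distrib_left)

lemma skew_form_self: "skew_form \<omega> \<Longrightarrow> \<omega> u u = 0"
  unfolding skew_form_def by (metis neg_equal_zero)

lemma pairing_omega_dual_self:
  assumes "bilinear_form \<omega>" and "skew_form \<omega>"
  shows "pairing (omega_dual \<omega> v) v = 0"
proof -
  have "\<omega> v v = fst v * \<omega> (1, 0) v + snd v * \<omega> (0, 1) v"
    using bilinear_form_add_left[OF assms(1)] by (rule additive_int_pair)
  then show ?thesis
    using skew_form_self[OF assms(2)] by (simp add: pairing_def omega_dual_def algebra_simps)
qed

lemma omega_shift_right:
  "bilinear_form \<omega> \<Longrightarrow> skew_form \<omega> \<Longrightarrow> \<omega> u (x + smul c u) = \<omega> u x"
  by (simp add: bilinear_form_add_right bilinear_form_smul_right skew_form_self)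

lemma omega_uminus_self:
  assumes "bilinear_form \<omega>" and "skew_form \<omega>"
  shows "\<omega> u (- u) = 0"
proof -
  have "- u = smul (- 1) u" by (cases u) (simp add: smul_def)
  then show ?thesis
    using assms by (simp add: bilinear_form_smul_right skew_form_self)
qed

lemma upper_antimono:
  assumes "bilinear_form \<omega>" and "skew_form \<omega>" and "W \<subseteq># V"
  shows "upper \<omega> V \<subseteq> upper \<omega> W"
proof
  fix x assume "x \<in> upper \<omega> V"
  then have x: "x \<in> laurentQ" "\<And>v. x \<in> (mu \<omega> v ^^ count V v) ` laurentQ"
    by (auto simp: upper_def)
  have "x \<in> (mu \<omega> v ^^ count W v) ` laurentQ" for v
    using laurentQ_funpow_mu_image_antimono[OF pairing_omega_dual_self[OF assms(1,2)]
        mset_subset_eq_count[OF assms(3)] x] .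
  with x(1) show "x \<in> upper \<omega> W"
    by (simp add: upper_def)
qed

lemma upper_eq_INTER_of_max_count:
  assumes "bilinear_form \<omega>" and "skew_form \<omega>" and "I \<noteq> {}"
    and sub: "\<And>i. i \<in> I \<Longrightarrow> W i \<subseteq># V"
    and attained: "\<And>v. \<exists>i\<in>I. count (W i) v = count V v"
  shows "upper \<omega> V = (\<Inter>i\<in>I. upper \<omega> (W i))"
proof
  show "upper \<omega> V \<subseteq> (\<Inter>i\<in>I. upper \<omega> (W i))"
    using upper_antimono[OF assms(1,2) sub] by blast
next
  show "(\<Inter>i\<in>I. upper \<omega> (W i)) \<subseteq> upper \<omega> V"
  proof
    fix x assume x: "x \<in> (\<Inter>i\<in>I. upper \<omega> (W i))"
    have "x \<in> (mu \<omega> v ^^ count V v) ` laurentQ" for v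
    proof -
      obtain i where "i \<in> I" "count (W i) v = count V v"
        using attained by blast
      with x have "x \<in> (mu \<omega> v ^^ count (W i) v) ` laurentQ"
        unfolding upper_def by blast
      with \<open>count (W i) v = count V v\<close> show ?thesis
        by simp
    qed
    moreover have "x \<in> laurentQ"
      using x \<open>I \<noteq> {}\<close> by (auto simp: upper_def)
    ultimately show "x \<in> upper \<omega> V"
      by (simp add: upper_def)
  qed
qed

lemma count_sum_replicate_mset:
  assumes "finite K" and "inj_on f K"
  shows "count (\<Sum>k\<in>K. replicate_mset (m k) (f k)) x = (if x \<in> f ` K then m (the_inv_into K f x) else 0)"
proof (cases "x \<in> f ` K")
  case True
  then obtain k0 where "k0 \<in> K" "x = f k0" by blast
  then have "count (\<Sum>k\<in>K. replicate_mset (m k) (f k)) x = (\<Sum>k\<in>K. if k = k0 then m k else 0)"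
    using assms(2) unfolding count_sum by (intro sum.cong) (auto simp: inj_on_def)
  then show ?thesis
    using \<open>k0 \<in> K\<close> \<open>x = f k0\<close> assms by (simp add: the_inv_into_f_f)
next
  case False
  then show ?thesis by (auto simp: count_sum intro!: sum.neutral)
qed

lemma upper_split_noncollinear:
  assumes bil: "bilinear_form \<omega>" and sk: "skew_form \<omega>" and "1 \<le> p"
    and K: "finite K" and inj: "inj_on f K" and noncol: "\<forall>k\<in>K. \<not> collinear u (f k)"
  shows "upper \<omega> (replicate_mset p u + replicate_mset q (- u) + (\<Sum>k\<in>K. replicate_mset (m k) (f k)))
     = upper \<omega> (replicate_mset p u + replicate_mset q (- u))
       \<inter> (\<Inter>k\<in>K. upper \<omega> (replicate_mset 1 u + replicate_mset (m k) (f k)))"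
proof -
  let ?V = "replicate_mset p u + replicate_mset q (- u) + (\<Sum>k\<in>K. replicate_mset (m k) (f k))"
  define W where "W i = (case i of None \<Rightarrow> replicate_mset p u + replicate_mset q (- u)
       | Some k \<Rightarrow> replicate_mset 1 u + replicate_mset (m k) (f k))" for i
  have f_ne: "f k \<noteq> u" "f k \<noteq> - u" if "k \<in> K" for k
    using noncol that by (auto simp: collinear_def)
  have "W i \<subseteq># ?V" if "i \<in> insert None (Some ` K)" for i
  proof (cases i)
    case (Some k)
    with that have k: "k \<in> K" by auto
    have "count (W i) x \<le> count ?V x" for x
      using \<open>1 \<le> p\<close> f_ne[OF k] k inj
      by (auto simp: Some W_def count_sum_replicate_mset[OF K inj] the_inv_into_f_f)
    then show ?thesis by (simp add: subseteq_mset_def)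
  qed (simp add: W_def)
  moreover have "\<exists>i\<in>insert None (Some ` K). count (W i) x = count ?V x" for x
  proof (cases "x \<in> f ` K")
    case True
    then obtain k where k: "k \<in> K" "x = f k" by blast
    then have "count (W (Some k)) x = count ?V x"
      using f_ne[OF k(1)] by (simp add: W_def count_sum_replicate_mset[OF K inj] the_inv_into_f_f[OF inj])
    then show ?thesis using k by blast
  qed (auto simp: W_def count_sum_replicate_mset[OF K inj])
  ultimately have "upper \<omega> ?V = (\<Inter>i\<in>insert None (Some ` K). upper \<omega> (W i))"
    by (intro upper_eq_INTER_of_max_count[OF bil sk]) auto
  then show ?thesis
    by (simp add: W_def)
qed

lemma image_mset_sum: "image_mset f (sum g K) = (\<Sum>k\<in>K. image_mset f (g k))"
  by (induction K rule: infinite_finite_induct) auto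

lemma mset_mutate:
  assumes bil: "bilinear_form \<omega>" and sk: "skew_form \<omega>"
    and xs: "mset xs = replicate_mset p u + replicate_mset q (- u) + (\<Sum>k\<in>K. replicate_mset (m k) (f k))"
    and "j < length xs" and "xs ! j = u" and "1 \<le> p"
  shows "mset (mutate \<omega> xs j) = replicate_mset (q + 1) (- u) + replicate_mset (p - 1) u
          + (\<Sum>k\<in>K. replicate_mset (m k) (f k + smul (max 0 (\<omega> u (f k))) u))"
proof -
  define h where "h x = x + smul (max 0 (\<omega> u x)) u" for x
  have h_u: "h u = u" and h_neg_u: "h (- u) = - u"
    using skew_form_self[OF sk] omega_uminus_self[OF bil sk] by (simp_all add: h_def)
  have "mutate \<omega> xs j = (map h xs)[j := - u]"
    using \<open>xs ! j = u\<close> by (intro nth_equalityI) (auto simp: mutate_def h_def nth_list_update)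
  then have "mset (mutate \<omega> xs j) = add_mset (- u) (mset (map h xs) - {#u#})"
    using \<open>j < length xs\<close> \<open>xs ! j = u\<close> by (simp add: mset_update h_u)
  also have "mset (map h xs) = replicate_mset p u + replicate_mset q (- u)
      + (\<Sum>k\<in>K. replicate_mset (m k) (f k + smul (max 0 (\<omega> u (f k))) u))"
    by (simp add: xs image_mset_sum h_u h_neg_u) (simp add: h_def)
  finally show ?thesis
    using \<open>1 \<le> p\<close> by (cases p) auto
qed

lemma collinear_uminus_shift: "collinear (- u) (x + smul c u) \<longleftrightarrow> collinear u x"
  by (simp add: collinear_def smul_def algebra_simps)

lemma inj_on_shift_by_omega:
  assumes "bilinear_form \<omega>" and "skew_form \<omega>" and "inj_on f K"
  shows "inj_on (\<lambda>k. f k + smul (max 0 (\<omega> u (f k))) u) K"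
proof (rule inj_onI)
  fix k l assume "k \<in> K" "l \<in> K"
    and eq: "f k + smul (max 0 (\<omega> u (f k))) u = f l + smul (max 0 (\<omega> u (f l))) u"
  then have "\<omega> u (f k) = \<omega> u (f l)"
    using omega_shift_right[OF assms(1,2), of u] by metis
  with eq have "f k = f l" by simp
  with \<open>k \<in> K\<close> \<open>l \<in> K\<close> show "k = l"
    using assms(3) by (auto dest: inj_onD)
qed

text \<open>The mutated collection again has the shape of part (c), now with respect to - u.\<close>

lemma upper_mutate:
  assumes bil: "bilinear_form \<omega>" and sk: "skew_form \<omega>"
    and xs: "mset xs = replicate_mset p u + replicate_mset q (- u) + (\<Sum>k\<in>K. replicate_mset (m k) (f k))"
    and "j < length xs" and "xs ! j = u" and "1 \<le> p"
    and K: "finite K" and inj: "inj_on f K" and noncol: "\<forall>k\<in>K. \<not> collinear u (f k)"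
  shows "upper \<omega> (mset (mutate \<omega> xs j)) =
           upper \<omega> (replicate_mset (q + 1) (- u) + replicate_mset (p - 1) u)
           \<inter> (\<Inter>k\<in>K. upper \<omega> (replicate_mset 1 (- u)
                + replicate_mset (m k) (f k + smul (max 0 (\<omega> u (f k))) u)))"
  using upper_split_noncollinear[OF bil sk _ K inj_on_shift_by_omega[OF bil sk inj],
      where p = "q + 1" and u = "- u" and q = "p - 1" and m = m]
    noncol mset_mutate[OF assms(1-6)]
  by (simp add: collinear_uminus_shift)

theorem lemma3p3:
  fixes \<omega> :: "lat \<Rightarrow> lat \<Rightarrow> int"
  assumes "bilinear_form \<omega>" and "skew_form \<omega>" and "nondegenerate \<omega>"
  shows
   "upper \<omega> {#} = laurentQ
    \<and> (\<forall>(V :: lat multiset) (A :: 'i set) (Vs :: 'i \<Rightarrow> lat multiset).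
         A \<noteq> {} \<longrightarrow> prim_coll V \<longrightarrow> (\<forall>\<alpha>\<in>A. prim_coll (Vs \<alpha>)) \<longrightarrow>
         (\<forall>v. (\<forall>\<alpha>\<in>A. count (Vs \<alpha>) v \<le> count V v) \<and> (\<exists>\<alpha>\<in>A. count (Vs \<alpha>) v = count V v)) \<longrightarrow>
         upper \<omega> V = (\<Inter>\<alpha>\<in>A. upper \<omega> (Vs \<alpha>)))
    \<and> (\<forall>V :: lat multiset. prim_coll V \<longrightarrow>
         upper \<omega> V = (\<Inter>v. upper \<omega> (replicate_mset (count V v) v)))
    \<and> (\<forall>(v1 :: lat) (mp :: nat) (mm :: nat) (K :: nat set) (vk :: nat \<Rightarrow> lat) (mk :: nat \<Rightarrow> nat).
         let V = replicate_mset mp v1 + replicate_mset mm (- v1)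
                 + (\<Sum>k\<in>K. replicate_mset (mk k) (vk k))
         in
         mp \<ge> 1 \<longrightarrow> finite K \<longrightarrow> inj_on vk K \<longrightarrow> (\<forall>k\<in>K. \<not> collinear v1 (vk k)) \<longrightarrow>
         prim_coll V \<longrightarrow>
         (upper \<omega> V = upper \<omega> (replicate_mset mp v1 + replicate_mset mm (- v1))
             \<inter> (\<Inter>k\<in>K. upper \<omega> (replicate_mset 1 v1 + replicate_mset (mk k) (vk k))))
         \<and> (\<forall>(xs :: lat list) (j :: nat).
              mset xs = V \<longrightarrow> j < length xs \<longrightarrow> xs ! j = v1 \<longrightarrow>
              mset (mutate \<omega> xs j) =
                  replicate_mset (mm + 1) (- v1) + replicate_mset (mp - 1) v1
                  + (\<Sum>k\<in>K. replicate_mset (mk k) (vk k + smul (max 0 (\<omega> v1 (vk k))) v1))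
              \<and> (prim_coll (mset (mutate \<omega> xs j)) \<longrightarrow>
                 upper \<omega> (mset (mutate \<omega> xs j)) =
                   upper \<omega> (replicate_mset (mm + 1) (- v1) + replicate_mset (mp - 1) v1)
                   \<inter> (\<Inter>k\<in>K. upper \<omega> (replicate_mset 1 (- v1)
                        + replicate_mset (mk k) (vk k + smul (max 0 (\<omega> v1 (vk k))) v1))))))"
proof -
  note bil = assms(1) and sk = assms(2)
  have empty: "upper \<omega> {#} = laurentQ"
    by (simp add: upper_def)
  have family: "upper \<omega> V = (\<Inter>\<alpha>\<in>A. upper \<omega> (Vs \<alpha>))"
    if "A \<noteq> {}" and "\<forall>v. (\<forall>\<alpha>\<in>A. count (Vs \<alpha>) v \<le> count V v) \<and> (\<exists>\<alpha>\<in>A. count (Vs \<alpha>) v = count V v)"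
    for V :: "lat multiset" and A :: "'i set" and Vs
    using that by (intro upper_eq_INTER_of_max_count[OF bil sk]) (auto simp: subseteq_mset_def)
  have single_vectors: "upper \<omega> V = (\<Inter>v. upper \<omega> (replicate_mset (count V v) v))" for V
    by (intro upper_eq_INTER_of_max_count[OF bil sk]) (auto simp: subseteq_mset_def)
  show ?thesis
    unfolding Let_def
    by (intro conjI allI impI empty family single_vectors upper_split_noncollinear[OF bil sk]
        mset_mutate[OF bil sk] upper_mutate[OF bil sk]) blast+
qed

end
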